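(* Let $B$ be a Horn program, $E^+,E^-$ finite sets of ground atoms, and $H,H'\in\mathcal{H}_{D,C}$ hypotheses with $H'$ a generalization of $H$. If $size(H') > fn(H,B,E^+) + size(H)$, then $S_{MDL}(H,B,E^+,E^-) > S_{MDL}(H',B,E^+,E^-)$.
   Context: A definite clause is a clause with exactly one positive literal. A hypothesis is a finite set of definite clauses; $\mathcal{H}_{D,C}$ denotes the hypothesis space of hypotheses consistent with a declaration bias $D$ and hypothesis constraints $C$ (only membership matters). $size(H)$ is the total number of literals in $H$. $B$ is background knowledge, $E^+$ positive and $E^-$ negative examples. For a hypothesis $H$: $tp(H,B,E^+)=|\{e\in E^+ : H\cup B\models e\}|$, $tn(H,B,E^-)=|\{e\in E^- : H\cup B\not\models e\}|$, $fn(H,B,E^+)=|E^+|-tp(H,B,E^+)$, and $S_{MDL}(H,B,E^+,E^-)=tp(H,B,E^+)+tn(H,B,E^-)-size(H)$. A clause $C_1$ subsumes a clause $C_2$ iff there is a substitution $\theta$ with $C_1\theta\subseteq C_2$. A clausal theory $T_1$ subsumes $T_2$ ($T_1\preceq T_2$) iff every clause of $T_2$ is subsumed by some clause of $T_1$. $T_1$ is a generalization of $T_2$ iff $T_1\preceq T_2$, and a specialization of $T_2$ iff $T_2\preceq T_1$. *)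

theory Defs
  imports Main
begin

datatype ('f, 'v) fterm = Var 'v | Fn 'f "('f, 'v) fterm list"

type_synonym ('p, 'f, 'v) atom = "'p \<times> ('f, 'v) fterm list"

datatype ('p, 'f, 'v) literal = Pos "('p, 'f, 'v) atom" | Neg "('p, 'f, 'v) atom"

text \<open>A clause is a finite set of literals (a disjunction, variables implicitly
  universally quantified).\<close>
type_synonym ('p, 'f, 'v) clause = "('p, 'f, 'v) literal set"

fun vars_term :: "('f, 'v) fterm \<Rightarrow> 'v set" where
  "vars_term (Var x) = {x}"
| "vars_term (Fn f ts) = (\<Union>t \<in> set ts. vars_term t)"

definition ground_term :: "('f, 'v) fterm \<Rightarrow> bool" where
  "ground_term t \<longleftrightarrow> vars_term t = {}"

definition ground_atom :: "('p, 'f, 'v) atom \<Rightarrow> bool" where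
  "ground_atom a \<longleftrightarrow> (\<forall>t \<in> set (snd a). ground_term t)"

fun subst_term :: "('v \<Rightarrow> ('f, 'v) fterm) \<Rightarrow> ('f, 'v) fterm \<Rightarrow> ('f, 'v) fterm" where
  "subst_term \<sigma> (Var x) = \<sigma> x"
| "subst_term \<sigma> (Fn f ts) = Fn f (map (subst_term \<sigma>) ts)"

definition subst_atom :: "('v \<Rightarrow> ('f, 'v) fterm) \<Rightarrow> ('p, 'f, 'v) atom \<Rightarrow> ('p, 'f, 'v) atom" where
  "subst_atom \<sigma> a = (fst a, map (subst_term \<sigma>) (snd a))"

fun subst_lit :: "('v \<Rightarrow> ('f, 'v) fterm) \<Rightarrow> ('p, 'f, 'v) literal \<Rightarrow> ('p, 'f, 'v) literal" where
  "subst_lit \<sigma> (Pos a) = Pos (subst_atom \<sigma> a)"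
| "subst_lit \<sigma> (Neg a) = Neg (subst_atom \<sigma> a)"

definition subst_clause :: "('v \<Rightarrow> ('f, 'v) fterm) \<Rightarrow> ('p, 'f, 'v) clause \<Rightarrow> ('p, 'f, 'v) clause" where
  "subst_clause \<sigma> C = subst_lit \<sigma> ` C"

definition pos_lits :: "('p, 'f, 'v) clause \<Rightarrow> ('p, 'f, 'v) literal set" where
  "pos_lits C = {l \<in> C. \<exists>a. l = Pos a}"

definition definite_clause :: "('p, 'f, 'v) clause \<Rightarrow> bool" where
  "definite_clause C \<longleftrightarrow> finite C \<and> card (pos_lits C) = 1"

definition horn_clause :: "('p, 'f, 'v) clause \<Rightarrow> bool" where
  "horn_clause C \<longleftrightarrow> finite C \<and> card (pos_lits C) \<le> 1"

definition horn_program :: "('p, 'f, 'v) clause set \<Rightarrow> bool" where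
  "horn_program B \<longleftrightarrow> finite B \<and> (\<forall>C \<in> B. horn_clause C)"

definition hypothesis :: "('p, 'f, 'v) clause set \<Rightarrow> bool" where
  "hypothesis H \<longleftrightarrow> finite H \<and> (\<forall>C \<in> H. definite_clause C)"

definition hsize :: "('p, 'f, 'v) clause set \<Rightarrow> nat" where
  "hsize H = (\<Sum>C \<in> H. card C)"

text \<open>A Herbrand interpretation is a set of ground atoms.  A clause is true in
  I iff each of its ground instances contains a true literal.\<close>

definition ground_subst :: "('v \<Rightarrow> ('f, 'v) fterm) \<Rightarrow> bool" where
  "ground_subst \<sigma> \<longleftrightarrow> (\<forall>x. ground_term (\<sigma> x))"

fun lit_true :: "('p, 'f, 'v) atom set \<Rightarrow> ('p, 'f, 'v) literal \<Rightarrow> bool" where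
  "lit_true I (Pos a) \<longleftrightarrow> a \<in> I"
| "lit_true I (Neg a) \<longleftrightarrow> a \<notin> I"

definition clause_true :: "('p, 'f, 'v) atom set \<Rightarrow> ('p, 'f, 'v) clause \<Rightarrow> bool" where
  "clause_true I C \<longleftrightarrow> (\<forall>\<sigma>. ground_subst \<sigma> \<longrightarrow> (\<exists>l \<in> C. lit_true I (subst_lit \<sigma> l)))"

definition herbrand_interp :: "('p, 'f, 'v) atom set \<Rightarrow> bool" where
  "herbrand_interp I \<longleftrightarrow> (\<forall>a \<in> I. ground_atom a)"

definition is_model :: "('p, 'f, 'v) atom set \<Rightarrow> ('p, 'f, 'v) clause set \<Rightarrow> bool" where
  "is_model I T \<longleftrightarrow> herbrand_interp I \<and> (\<forall>C \<in> T. clause_true I C)"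

definition entails :: "('p, 'f, 'v) clause set \<Rightarrow> ('p, 'f, 'v) atom \<Rightarrow> bool" where
  "entails T e \<longleftrightarrow> (\<forall>I. is_model I T \<longrightarrow> clause_true I {Pos e})"

definition subsumes :: "('p, 'f, 'v) clause \<Rightarrow> ('p, 'f, 'v) clause \<Rightarrow> bool" where
  "subsumes C1 C2 \<longleftrightarrow> (\<exists>\<theta>. subst_clause \<theta> C1 \<subseteq> C2)"

definition theory_subsumes :: "('p, 'f, 'v) clause set \<Rightarrow> ('p, 'f, 'v) clause set \<Rightarrow> bool" where
  "theory_subsumes T1 T2 \<longleftrightarrow> (\<forall>C2 \<in> T2. \<exists>C1 \<in> T1. subsumes C1 C2)"

definition generalization :: "('p, 'f, 'v) clause set \<Rightarrow> ('p, 'f, 'v) clause set \<Rightarrow> bool" where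
  "generalization T1 T2 \<longleftrightarrow> theory_subsumes T1 T2"

definition tp :: "('p, 'f, 'v) clause set \<Rightarrow> ('p, 'f, 'v) clause set \<Rightarrow> ('p, 'f, 'v) atom set \<Rightarrow> nat" where
  "tp H B Ep = card {e \<in> Ep. entails (H \<union> B) e}"

definition tn :: "('p, 'f, 'v) clause set \<Rightarrow> ('p, 'f, 'v) clause set \<Rightarrow> ('p, 'f, 'v) atom set \<Rightarrow> nat" where
  "tn H B En = card {e \<in> En. \<not> entails (H \<union> B) e}"

definition fn :: "('p, 'f, 'v) clause set \<Rightarrow> ('p, 'f, 'v) clause set \<Rightarrow> ('p, 'f, 'v) atom set \<Rightarrow> nat" where
  "fn H B Ep = card Ep - tp H B Ep"

definition S_MDL :: "('p, 'f, 'v) clause set \<Rightarrow> ('p, 'f, 'v) clause set \<Rightarrow> ('p, 'f, 'v) atom set \<Rightarrow> ('p, 'f, 'v) atom set \<Rightarrow> int" where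
  "S_MDL H B Ep En = int (tp H B Ep) + int (tn H B En) - int (hsize H)"

end

theory Submission
  imports Defs
begin

text \<open>If every clause of H is subsumed by a clause of H', then every model of H' is a model
  of H, so H' (with B) entails every atom that H (with B) entails. Passing from H to H'
  therefore loses no true positive and can gain at most fn(H) of them, while it can only
  lose true negatives. The score thus rises by at most fn(H), which the growth in size
  exceeds. Neither the Horn form of B, nor groundness of the examples, nor the
  declaration bias plays any role.\<close>

lemma subst_term_Var [simp]: "subst_term Var = id"
proof
  show "subst_term Var t = id t" for t :: "('f, 'v) fterm"
    by (induction t) (auto simp: map_idI)
qed

lemma subst_term_subst_term:
  "subst_term \<sigma> (subst_term \<theta> t) = subst_term (subst_term \<sigma> \<circ> \<theta>) t"
  by (induction t) auto

lemma subst_lit_subst_lit: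
  "subst_lit \<sigma> (subst_lit \<theta> l) = subst_lit (subst_term \<sigma> \<circ> \<theta>) l"
  by (cases l) (auto simp: subst_atom_def subst_term_subst_term)

lemma ground_term_subst_term:
  "ground_subst \<sigma> \<Longrightarrow> ground_term (subst_term \<sigma> t)"
  by (induction t) (auto simp: ground_subst_def ground_term_def)

lemma ground_subst_comp:
  "ground_subst \<sigma> \<Longrightarrow> ground_subst (subst_term \<sigma> \<circ> \<theta>)"
  by (simp add: ground_subst_def ground_term_subst_term)

lemma subsumes_refl:
  fixes C :: "('p, 'f, 'v) clause"
  shows "subsumes C C"
proof -
  have "subst_lit Var l = l" for l :: "('p, 'f, 'v) literal"
    by (cases l) (simp_all add: subst_atom_def)
  then have "subst_clause Var C = C"
    by (simp add: subst_clause_def)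
  then show ?thesis
    unfolding subsumes_def by blast
qed

lemma theory_subsumes_Un:
  "theory_subsumes T1 T2 \<Longrightarrow> theory_subsumes (T1 \<union> B) (T2 \<union> B)"
  unfolding theory_subsumes_def by (blast intro: subsumes_refl)

lemma clause_true_subsumes:
  fixes C1 C2 :: "('p, 'f, 'v) clause"
  assumes "subsumes C1 C2" and "clause_true I C1"
  shows "clause_true I C2"
  unfolding clause_true_def
proof (intro allI impI)
  fix \<sigma> :: "'v \<Rightarrow> ('f, 'v) fterm"
  assume "ground_subst \<sigma>"
  obtain \<theta> where \<theta>: "subst_clause \<theta> C1 \<subseteq> C2"
    using assms(1) unfolding subsumes_def by blast
  obtain l where "l \<in> C1" and "lit_true I (subst_lit (subst_term \<sigma> \<circ> \<theta>) l)"
    using assms(2) ground_subst_comp[OF \<open>ground_subst \<sigma>\<close>] unfolding clause_true_def by blast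
  moreover have "subst_lit \<theta> l \<in> C2"
    using \<theta> \<open>l \<in> C1\<close> by (auto simp: subst_clause_def)
  ultimately show "\<exists>l \<in> C2. lit_true I (subst_lit \<sigma> l)"
    by (metis subst_lit_subst_lit)
qed

lemma is_model_theory_subsumes:
  "theory_subsumes T1 T2 \<Longrightarrow> is_model I T1 \<Longrightarrow> is_model I T2"
  unfolding is_model_def theory_subsumes_def by (blast intro: clause_true_subsumes)

lemma entails_theory_subsumes:
  "theory_subsumes T1 T2 \<Longrightarrow> entails T2 e \<Longrightarrow> entails T1 e"
  unfolding entails_def by (blast intro: is_model_theory_subsumes)

lemma entails_generalization:
  "generalization H' H \<Longrightarrow> entails (H \<union> B) e \<Longrightarrow> entails (H' \<union> B) e"
  unfolding generalization_def by (blast intro: entails_theory_subsumes theory_subsumes_Un)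

lemma tp_le_card: "finite Ep \<Longrightarrow> tp H B Ep \<le> card Ep"
  unfolding tp_def by (rule card_mono) auto

lemma tn_generalization_le:
  assumes "generalization H' H" and "finite En"
  shows "tn H' B En \<le> tn H B En"
  unfolding tn_def
  using assms by (intro card_mono) (auto dest: entails_generalization)

theorem proposition4p12:
  fixes B H H' :: "('p, 'f, 'v) clause set"
    and Ep En :: "('p, 'f, 'v) atom set"
    and HDC :: "('p, 'f, 'v) clause set set"
  assumes "horn_program B"
    and "finite Ep" and "\<forall>e \<in> Ep. ground_atom e"
    and "finite En" and "\<forall>e \<in> En. ground_atom e"
    and "\<forall>X \<in> HDC. hypothesis X"
    and "H \<in> HDC" and "H' \<in> HDC"
    and "generalization H' H"
    and "hsize H' > fn H B Ep + hsize H"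
  shows "S_MDL H B Ep En > S_MDL H' B Ep En"
proof -
  have "tp H' B Ep \<le> card Ep" and "tp H B Ep \<le> card Ep"
    using \<open>finite Ep\<close> by (simp_all add: tp_le_card)
  moreover have "tn H' B En \<le> tn H B En"
    using \<open>generalization H' H\<close> \<open>finite En\<close> by (rule tn_generalization_le)
  ultimately show ?thesis
    using \<open>hsize H' > fn H B Ep + hsize H\<close> unfolding S_MDL_def fn_def by linarith
qed

end
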